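(* Let $\Sigma=\{s_0,s_1,\dots,s_{\sigma-1}\}$ be an ordered alphabet of size $\sigma\ge 1$ with $s_0<s_1<\cdots<s_{\sigma-1}$, and let $k_0,\dots,k_{\sigma-1}$ be integers with $k_i>1$ for all $i$. Let $$K=s_{\sigma-1}^{k_{\sigma-1}}\,s_{\sigma-2}^{k_{\sigma-2}}\cdots s_1^{k_1}\,s_0^{k_0}.$$ Then a smallest suffixient set for $K\$$ has size $\chi(K)=2\sigma$.
   Context: Strings are $0$-indexed; $w[i..j]$ denotes the substring from position $i$ to $j$ inclusive. $\$\notin\Sigma$ is an end-marker smaller than every letter of $\Sigma$, occurring only at the end of $K\$$; substrings of $K\$$ are words over $\Sigma\cup\{\$\}$. For a string $v$, a substring $x$ of $v$ (possibly empty) is right-maximal if there are two distinct letters $a\ne b$ such that both $xa$ and $xb$ are substrings of $v$; the words $xa$ that are substrings of $v$, for right-maximal $x$, are called right-extensions of $v$. A set $S$ of positions of $v$ is suffixient for $v$ if every right-extension $x$ of $v$ is a suffix of $v[0..j]$ for some $j\in S$. $\chi(K)$ denotes the minimum size of a suffixient set for $K\$$. *)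

theory Defs
  imports Main "HOL-Library.Sublist"
begin

text \<open>Strings are lists, 0-indexed. A substring is a contiguous sublist (Sublist.sublist).\<close>

definition right_maximal :: "'a list \<Rightarrow> 'a list \<Rightarrow> bool" where
  "right_maximal v x \<longleftrightarrow> (\<exists>a b. a \<noteq> b \<and> sublist (x @ [a]) v \<and> sublist (x @ [b]) v)"

definition right_extension :: "'a list \<Rightarrow> 'a list \<Rightarrow> bool" where
  "right_extension v y \<longleftrightarrow> (\<exists>x a. y = x @ [a] \<and> right_maximal v x \<and> sublist (x @ [a]) v)"

definition suffixient :: "'a list \<Rightarrow> nat set \<Rightarrow> bool" where
  "suffixient v S \<longleftrightarrow> S \<subseteq> {..<length v} \<and>
     (\<forall>y. right_extension v y \<longrightarrow> (\<exists>j\<in>S. suffix y (take (Suc j) v)))"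

text \<open>Minimum size of a suffixient set of v (chi(K) is this applied to v = K\$).\<close>
definition min_suffixient_size :: "'a list \<Rightarrow> nat" where
  "min_suffixient_size v = (LEAST n. \<exists>S. suffixient v S \<and> card S = n)"

definition block_word :: "nat \<Rightarrow> (nat \<Rightarrow> 'a) \<Rightarrow> (nat \<Rightarrow> nat) \<Rightarrow> 'a list" where
  "block_word \<sigma> s k = concat (map (\<lambda>i. replicate (k i) (s i)) (rev [0..<\<sigma>]))"

end

theory Submission
  imports Defs
begin

(* Let v = K$ and call run i the block s_i^{k_i} of v. Since the runs carry pairwise distinct
   letters, every change of letter occurs at exactly one position of v, so a word occurring
   twice in v is a power c^n of a single letter. Hence every right-maximal word is such a power,
   and its right-extensions c^(n+1) and c^n a (a <> c) occur ending at the last position of the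
   run of c and at the position just after it, respectively. These 2 sigma positions therefore
   form a suffixient set. Conversely x = s_i^(k_i - 1) is right-maximal because k_i > 1, and its
   extensions x s_i and x b, where b follows run i, each occur exactly once, ending at exactly
   these two positions; so every suffixient set contains all of them. *)

lemma suffix_take_iff_nth:
  assumes "n \<le> length v"
  shows "suffix y (take n v) \<longleftrightarrow>
    length y \<le> n \<and> (\<forall>u<length y. y ! u = v ! (n - length y + u))"
proof
  assume "suffix y (take n v)"
  then obtain zs where zs: "take n v = zs @ y" by (auto simp: suffix_def)
  then have len: "length zs = n - length y" "length y \<le> n"
    using assms by (metis add_diff_cancel_right' le_add2 length_append length_take min.absorb2)+
  have "y ! u = v ! (n - length y + u)" if "u < length y" for u
  proof -
    have "take n v ! (length zs + u) = y ! u" using zs by (simp add: nth_append)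
    then show ?thesis using len that by simp
  qed
  then show "length y \<le> n \<and> (\<forall>u<length y. y ! u = v ! (n - length y + u))"
    using len by blast
next
  assume "length y \<le> n \<and> (\<forall>u<length y. y ! u = v ! (n - length y + u))"
  then have "drop (n - length y) (take n v) = y"
    using assms by (intro nth_equalityI) auto
  then show "suffix y (take n v)" by (metis suffix_drop)
qed

lemma sublist_if_suffix_take: "suffix y (take n v) \<Longrightarrow> sublist y v"
  by (meson prefix_imp_sublist sublist_order.dual_order.trans suffix_imp_sublist take_is_prefix)

lemma sublist_iff_suffix_take:
  assumes "y \<noteq> []"
  shows "sublist y v \<longleftrightarrow> (\<exists>j<length v. suffix y (take (Suc j) v))"
proof
  assume "sublist y v"
  then obtain zs where "prefix zs v" "suffix y zs" by (auto simp: sublist_altdef)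
  moreover from this have "zs \<noteq> []" using assms by auto
  ultimately have "length zs - 1 < length v" "take (Suc (length zs - 1)) v = zs"
    by (auto simp: prefix_def neq_Nil_conv)
  then show "\<exists>j<length v. suffix y (take (Suc j) v)" using \<open>suffix y zs\<close> by metis
next
  assume "\<exists>j<length v. suffix y (take (Suc j) v)"
  then show "sublist y v" using sublist_if_suffix_take by blast
qed

lemma suffix_snoc_take_Suc_iff:
  "j < length v \<Longrightarrow> suffix (x @ [a]) (take (Suc j) v) \<longleftrightarrow> v ! j = a \<and> suffix x (take j v)"
  by (auto simp: take_Suc_conv_app_nth)

lemma replicate_hd_if_adjacent_eq:
  "(\<And>t. Suc t < length x \<Longrightarrow> x ! t = x ! Suc t) \<Longrightarrow> x = replicate (length x) (hd x)"
proof (induction x)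
  case Nil then show ?case by simp
next
  case (Cons a x)
  then have "x = replicate (length x) (hd x)" by force
  moreover have "x \<noteq> [] \<Longrightarrow> hd x = a" using Cons.prems[of 0] by (simp add: hd_conv_nth)
  ultimately show ?case by (cases x) auto
qed

definition unique_letter_changes :: "'a list \<Rightarrow> bool" where
  "unique_letter_changes v \<longleftrightarrow>
    (\<forall>q q'. Suc q < length v \<longrightarrow> Suc q' < length v \<longrightarrow> v ! q \<noteq> v ! Suc q \<longrightarrow>
      v ! q' = v ! q \<longrightarrow> v ! Suc q' = v ! Suc q \<longrightarrow> q' = q)"

lemma suffix_take_unique_if_letter_change:
  assumes "unique_letter_changes v"
    and change: "Suc t < length x" "x ! t \<noteq> x ! Suc t"
    and occ: "n1 \<le> length v" "suffix x (take n1 v)" "n2 \<le> length v" "suffix x (take n2 v)"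
  shows "n1 = n2"
proof -
  have at1: "length x \<le> n1" "\<And>u. u < length x \<Longrightarrow> x ! u = v ! (n1 - length x + u)"
    using occ(1,2) by (simp_all add: suffix_take_iff_nth)
  have at2: "length x \<le> n2" "\<And>u. u < length x \<Longrightarrow> x ! u = v ! (n2 - length x + u)"
    using occ(3,4) by (simp_all add: suffix_take_iff_nth)
  have same: "v ! (n2 - length x + u) = v ! (n1 - length x + u)" if "u < length x" for u
    using at1(2)[OF that] at2(2)[OF that] by argo
  have "n2 - length x + t = n1 - length x + t"
    using assms(1) unfolding unique_letter_changes_def
  proof (elim allE impE)
    have "Suc (n - length x + t) < length v" if "length x \<le> n" "n \<le> length v" for n
      using change(1) that by linarith
    then show "Suc (n1 - length x + t) < length v" "Suc (n2 - length x + t) < length v"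
      using at1(1) at2(1) occ(1,3) by blast+
    show "v ! (n1 - length x + t) \<noteq> v ! Suc (n1 - length x + t)"
      using at1(2)[of t] at1(2)[of "Suc t"] change by simp
    show "v ! (n2 - length x + t) = v ! (n1 - length x + t)"
      "v ! Suc (n2 - length x + t) = v ! Suc (n1 - length x + t)"
      using same[of t] same[of "Suc t"] change(1) by simp_all
  qed
  then show ?thesis using at1(1) at2(1) by simp
qed

lemma right_maximal_replicate:
  assumes "unique_letter_changes v" "right_maximal v x"
  shows "x = replicate (length x) (hd x)"
proof (rule ccontr)
  assume "x \<noteq> replicate (length x) (hd x)"
  then have "\<not> (\<forall>t. Suc t < length x \<longrightarrow> x ! t = x ! Suc t)"
    using replicate_hd_if_adjacent_eq by blast
  then obtain t where change: "Suc t < length x" "x ! t \<noteq> x ! Suc t" by blast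
  obtain a b where "a \<noteq> b" "sublist (x @ [a]) v" "sublist (x @ [b]) v"
    using \<open>right_maximal v x\<close> by (auto simp: right_maximal_def)
  then obtain j1 j2 where "j1 < length v" "suffix (x @ [a]) (take (Suc j1) v)"
    and "j2 < length v" "suffix (x @ [b]) (take (Suc j2) v)"
    using sublist_iff_suffix_take[of "x @ [_]" v] by blast
  then have j1: "j1 < length v" "v ! j1 = a" "suffix x (take j1 v)"
    and j2: "j2 < length v" "v ! j2 = b" "suffix x (take j2 v)"
    by (simp_all add: suffix_snoc_take_Suc_iff)
  have "j1 = j2"
    by (rule suffix_take_unique_if_letter_change[OF assms(1) change]) (use j1 j2 in simp_all)
  then show False using j1 j2 \<open>a \<noteq> b\<close> by simp
qed

lemma suffixient_mem_if_unique_occurrence: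
  assumes "suffixient v S" "right_extension v y"
    and unique: "\<And>j'. j' < length v \<Longrightarrow> suffix y (take (Suc j') v) \<Longrightarrow> j' = j"
  shows "j \<in> S"
proof -
  obtain j' where "j' \<in> S" "suffix y (take (Suc j') v)"
    using assms(1,2) unfolding suffixient_def by blast
  moreover have "j' < length v" using \<open>j' \<in> S\<close> assms(1) unfolding suffixient_def by blast
  ultimately show ?thesis using unique by blast
qed

lemma block_word_Suc: "block_word (Suc n) s k = replicate (k n) (s n) @ block_word n s k"
  by (simp add: block_word_def)

lemma length_block_word: "length (block_word n s k) = (\<Sum>j<n. k j)"
  by (induction n) (simp_all add: block_word_Suc block_word_def)

lemma nth_block_word:
  "i < n \<Longrightarrow> (\<Sum>j<n. k j) - (\<Sum>j<Suc i. k j) \<le> p \<Longrightarrow> p < (\<Sum>j<n. k j) - (\<Sum>j<i. k j) \<Longrightarrow>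
    block_word n s k ! p = s i"
proof (induction n arbitrary: p)
  case 0 then show ?case by simp
next
  case (Suc n)
  show ?case
  proof (cases "i = n")
    case True
    then show ?thesis using Suc.prems by (simp add: block_word_Suc nth_append)
  next
    case False
    then have "(\<Sum>j<Suc i. k j) \<le> (\<Sum>j<n. k j)" using Suc.prems(1) by (intro sum_mono2) auto
    then have "k n \<le> p" using Suc.prems(2) by simp
    moreover have "block_word n s k ! (p - k n) = s i"
      using Suc.prems False \<open>k n \<le> p\<close> by (intro Suc.IH) auto
    ultimately show ?thesis by (simp add: block_word_Suc nth_append)
  qed
qed

lemma ex_prefix_sum_interval:
  fixes k :: "nat \<Rightarrow> nat"
  shows "d < (\<Sum>j<n. k j) \<Longrightarrow> \<exists>i<n. (\<Sum>j<i. k j) \<le> d \<and> d < (\<Sum>j<Suc i. k j)"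
proof (induction n)
  case (Suc n)
  show ?case
  proof (cases "d < (\<Sum>j<n. k j)")
    case True
    then show ?thesis using Suc.IH by (meson less_SucI)
  next
    case False
    then show ?thesis using Suc.prems by (intro exI[of _ n]) simp
  qed
qed simp

locale end_marked_block_word =
  fixes \<sigma> :: nat and s :: "nat \<Rightarrow> 'a" and k :: "nat \<Rightarrow> nat" and dollar :: 'a
  assumes inj_s: "inj_on s {..<\<sigma>}"
    and dollar_notin: "dollar \<notin> s ` {..<\<sigma>}"
    and k_gt_1: "\<And>i. i < \<sigma> \<Longrightarrow> k i > 1"
begin

(* Run i, the block s_i^(k_i), occupies the positions run_end (Suc i) ..< run_end i of v;
   run_end 0 = L is the position of the end-marker. *)

abbreviation L :: nat where "L \<equiv> \<Sum>j<\<sigma>. k j"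

abbreviation run_end :: "nat \<Rightarrow> nat" where "run_end i \<equiv> L - (\<Sum>j<i. k j)"

abbreviation v :: "'a list" where "v \<equiv> block_word \<sigma> s k @ [dollar]"

abbreviation boundaries :: "nat set" where
  "boundaries \<equiv> (\<lambda>i. run_end i - 1) ` {..<\<sigma>} \<union> run_end ` {..<\<sigma>}"

lemma length_v: "length v = Suc L"
  by (simp add: length_block_word)

lemma run_end_Suc: "i < \<sigma> \<Longrightarrow> run_end (Suc i) + k i = run_end i"
proof -
  assume "i < \<sigma>"
  then have "(\<Sum>j<Suc i. k j) \<le> L" by (intro sum_mono2) auto
  then show ?thesis by simp
qed

lemma run_end_gap: "i < j \<Longrightarrow> j \<le> \<sigma> \<Longrightarrow> run_end j + 2 \<le> run_end i"
proof (induction j)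
  case (Suc j)
  then have "run_end (Suc j) + 2 \<le> run_end j" using run_end_Suc[of j] k_gt_1[of j] by simp
  then show ?case using Suc by (cases "i = j") simp_all
qed simp

lemma nth_v_L: "v ! L = dollar"
  by (simp add: nth_append length_block_word)

lemma nth_v_run:
  assumes "i < \<sigma>" "run_end (Suc i) \<le> p" "p < run_end i"
  shows "v ! p = s i"
proof -
  have "p < L" using assms(3) by linarith
  then show ?thesis using assms by (simp add: nth_append length_block_word nth_block_word)
qed

lemma ex_run_containing: "p < L \<Longrightarrow> \<exists>i<\<sigma>. run_end (Suc i) \<le> p \<and> p < run_end i"
  using ex_prefix_sum_interval[of "L - Suc p" k \<sigma>] by fastforce

lemma nth_v_eq_s_iff:
  assumes "i < \<sigma>" "p \<le> L"
  shows "v ! p = s i \<longleftrightarrow> run_end (Suc i) \<le> p \<and> p < run_end i"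
proof
  assume "v ! p = s i"
  then have "p < L" using nth_v_L dollar_notin assms by (metis le_neq_implies_less lessThan_iff rev_image_eqI)
  then obtain i' where "i' < \<sigma>" "run_end (Suc i') \<le> p" "p < run_end i'"
    using ex_run_containing by blast
  moreover from this have "s i' = s i" using nth_v_run \<open>v ! p = s i\<close> by simp
  ultimately show "run_end (Suc i) \<le> p \<and> p < run_end i"
    using inj_s assms(1) by (metis inj_onD lessThan_iff)
qed (use nth_v_run assms in blast)

lemma nth_v_change:
  assumes "Suc q \<le> L" "v ! q \<noteq> v ! Suc q"
  shows "\<exists>i<\<sigma>. Suc q = run_end i \<and> v ! q = s i"
proof -
  obtain i where i: "i < \<sigma>" "run_end (Suc i) \<le> q" "q < run_end i"
    using ex_run_containing[of q] assms(1) by auto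
  have "Suc q = run_end i"
  proof (rule ccontr)
    assume "Suc q \<noteq> run_end i"
    then have "v ! Suc q = s i" using nth_v_run i by simp
    then show False using assms(2) nth_v_run i by simp
  qed
  then show ?thesis using nth_v_run i by blast
qed

lemma unique_letter_changes_v: "unique_letter_changes v"
  unfolding unique_letter_changes_def
proof (intro allI impI)
  fix q q'
  assume "Suc q < length v" "Suc q' < length v" "v ! q \<noteq> v ! Suc q"
    and "v ! q' = v ! q" "v ! Suc q' = v ! Suc q"
  moreover from this obtain i where "i < \<sigma>" "Suc q = run_end i" "v ! q = s i"
    using nth_v_change[of q] length_v by auto
  moreover obtain i' where "i' < \<sigma>" "Suc q' = run_end i'" "v ! q' = s i'"
    using nth_v_change[of q'] calculation length_v by auto
  ultimately show "q' = q"
    using inj_s by (metis Suc_inject inj_onD lessThan_iff)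
qed

lemma nth_v_run_end: "i < \<sigma> \<Longrightarrow> v ! run_end i \<noteq> s i"
  using nth_v_eq_s_iff[of i "run_end i"] by simp

lemma suffix_replicate_take_v_iff:
  assumes "i < \<sigma>" "n \<le> Suc L" "0 < m"
  shows "suffix (replicate m (s i)) (take n v) \<longleftrightarrow> run_end (Suc i) + m \<le> n \<and> n \<le> run_end i"
proof -
  have in_run: "s i = v ! (n - m + u) \<longleftrightarrow> run_end (Suc i) \<le> n - m + u \<and> n - m + u < run_end i"
    if "u < m" "m \<le> n" for u
    using nth_v_eq_s_iff[OF assms(1), of "n - m + u"] that assms(2) by auto
  have "suffix (replicate m (s i)) (take n v) \<longleftrightarrow> m \<le> n \<and> (\<forall>u<m. s i = v ! (n - m + u))"
    using suffix_take_iff_nth[of n v "replicate m (s i)"] assms(2) length_v by simp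
  also have "\<dots> \<longleftrightarrow> m \<le> n \<and> (\<forall>u<m. run_end (Suc i) \<le> n - m + u \<and> n - m + u < run_end i)"
    using in_run by blast
  also have "\<dots> \<longleftrightarrow> run_end (Suc i) + m \<le> n \<and> n \<le> run_end i"
  proof
    assume *: "m \<le> n \<and> (\<forall>u<m. run_end (Suc i) \<le> n - m + u \<and> n - m + u < run_end i)"
    then have "run_end (Suc i) \<le> n - m" "n - m + (m - 1) < run_end i"
      using assms(3) by (auto dest: spec[of _ 0] spec[of _ "m - 1"])
    then show "run_end (Suc i) + m \<le> n \<and> n \<le> run_end i"
      using * assms(3) by linarith
  qed auto
  finally show ?thesis .
qed

lemma ends_after_run:
  assumes "x \<noteq> []" "last x \<noteq> a" "j \<le> L" "suffix (x @ [a]) (take (Suc j) v)"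
  shows "\<exists>i<\<sigma>. j = run_end i \<and> last x = s i"
proof -
  have "v ! j = a" "suffix x (take j v)"
    using assms(3,4) length_v suffix_snoc_take_Suc_iff[of j v x a] by simp_all
  moreover from this have "0 < j"
    using assms(1) suffix_length_le[of x "take j v"] by (cases x) auto
  moreover from calculation have "last x = v ! (j - 1)"
  proof -
    obtain zs where "take j v = zs @ x" using \<open>suffix x (take j v)\<close> by (auto simp: suffix_def)
    then have "last x = last (take j v)" using assms(1) by simp
    also have "\<dots> = v ! (j - 1)"
      using take_Suc_conv_app_nth[of "j - 1" v] \<open>0 < j\<close> assms(3) length_v by simp
    finally show ?thesis .
  qed
  ultimately show ?thesis
    using nth_v_change[of "j - 1"] assms(2,3) by auto
qed

lemma replicate_occurs_at_boundary:
  assumes "0 < \<sigma>" "0 < m" "j \<le> L" "suffix (replicate m c) (take (Suc j) v)"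
  shows "\<exists>j'\<in>boundaries. suffix (replicate m c) (take (Suc j') v)"
proof (cases "j = L")
  case True
  then have "j \<in> boundaries" using assms(1) by force
  then show ?thesis using assms(4) by blast
next
  case False
  then obtain i where i: "i < \<sigma>" "run_end (Suc i) \<le> j" "j < run_end i"
    using ex_run_containing[of j] assms(3) by auto
  have "m \<le> Suc j" and all: "\<forall>u<m. c = v ! (Suc j - m + u)"
    using assms(3,4) length_v suffix_take_iff_nth[of "Suc j" v "replicate m c"] by simp_all
  moreover have "m - 1 < m" "Suc j - m + (m - 1) = j" using \<open>m \<le> Suc j\<close> assms(2) by simp_all
  ultimately have "c = v ! j" by metis
  then have c: "c = s i" using nth_v_run i by simp
  then have "run_end (Suc i) + m \<le> run_end i"
    using assms(2-4) i suffix_replicate_take_v_iff[of i "Suc j" m] by simp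
  moreover have "Suc (run_end i - 1) = run_end i"
    using run_end_Suc[OF i(1)] k_gt_1[OF i(1)] by simp
  ultimately have "suffix (replicate m c) (take (Suc (run_end i - 1)) v)"
    using c i(1) assms(2) suffix_replicate_take_v_iff[of i "run_end i" m] by simp
  moreover have "run_end i - 1 \<in> boundaries" using i(1) by blast
  ultimately show ?thesis by blast
qed

lemma suffixient_boundaries:
  assumes "0 < \<sigma>"
  shows "suffixient v boundaries"
  unfolding suffixient_def
proof (intro conjI allI impI)
  show "boundaries \<subseteq> {..<length v}" using length_v by auto
  fix y assume "right_extension v y"
  then obtain x a where y: "y = x @ [a]" and rm: "right_maximal v x" and occ: "sublist (x @ [a]) v"
    unfolding right_extension_def by blast
  obtain j where "j < length v" "suffix (x @ [a]) (take (Suc j) v)"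
    using occ sublist_iff_suffix_take[of "x @ [a]" v] by blast
  then have j: "j \<le> L" "suffix (x @ [a]) (take (Suc j) v)" using length_v by simp_all
  have x: "x = replicate (length x) (hd x)"
    using right_maximal_replicate[OF unique_letter_changes_v rm] .
  consider "a = hd x" | "x = []" | "x \<noteq> []" "a \<noteq> hd x" by blast
  then show "\<exists>j\<in>boundaries. suffix y (take (Suc j) v)"
  proof cases
    case 1
    then have y_rep: "y = replicate (Suc (length x)) a"
      using x y by (metis replicate_Suc replicate_append_same)
    then obtain j' where "j' \<in> boundaries" "suffix (replicate (Suc (length x)) a) (take (Suc j') v)"
      using replicate_occurs_at_boundary[OF assms zero_less_Suc j(1)] j(2) y by metis
    then show ?thesis using y_rep by blast
  next
    case 2
    then show ?thesis using replicate_occurs_at_boundary[OF assms _ j(1), of 1 a] j(2) y by simp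
  next
    case 3
    then have "last x = hd x" using x by (metis last_replicate length_0_conv)
    then obtain i where "i < \<sigma>" "j = run_end i"
      using ends_after_run[OF 3(1) _ j] 3(2) by auto
    then show ?thesis using j(2) y by blast
  qed
qed

lemma right_extensions_at_run_end:
  assumes i: "i < \<sigma>"
  shows "right_extension v (replicate (k i) (s i))"
    and "right_extension v (replicate (k i - 1) (s i) @ [v ! run_end i])"
proof -
  let ?x = "replicate (k i - 1) (s i)"
  have k: "run_end (Suc i) + k i = run_end i" "1 < k i" using run_end_Suc k_gt_1 i by auto
  have "suffix (replicate (k i) (s i)) (take (run_end i) v)"
    using k suffix_replicate_take_v_iff[OF i, of "run_end i" "k i"] by simp
  moreover have "?x @ [s i] = replicate (k i) (s i)"
    using k(2) by (simp add: replicate_append_same flip: replicate_Suc)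
  moreover have "suffix ?x (take (run_end i) v)"
    using k suffix_replicate_take_v_iff[OF i, of "run_end i" "k i - 1"] by simp
  then have "suffix (?x @ [v ! run_end i]) (take (Suc (run_end i)) v)"
    using length_v suffix_snoc_take_Suc_iff[of "run_end i" v] by simp
  ultimately have "sublist (?x @ [s i]) v" "sublist (?x @ [v ! run_end i]) v"
    using sublist_if_suffix_take by metis+
  moreover from this have "right_maximal v ?x"
    using nth_v_run_end[OF i] unfolding right_maximal_def by metis
  ultimately show "right_extension v (replicate (k i) (s i))"
    and "right_extension v (?x @ [v ! run_end i])"
    unfolding right_extension_def by (metis \<open>?x @ [s i] = replicate (k i) (s i)\<close>)+
qed

lemma run_last_mem_suffixient:
  assumes "suffixient v S" "i < \<sigma>"
  shows "run_end i - 1 \<in> S"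
proof (rule suffixient_mem_if_unique_occurrence[OF assms(1) right_extensions_at_run_end(1)[OF assms(2)]])
  fix j assume "j < length v" "suffix (replicate (k i) (s i)) (take (Suc j) v)"
  then have "Suc j = run_end i"
    using run_end_Suc[OF assms(2)] k_gt_1[OF assms(2)] length_v
      suffix_replicate_take_v_iff[OF assms(2), of "Suc j" "k i"] by simp
  then show "j = run_end i - 1" by simp
qed

lemma run_end_mem_suffixient:
  assumes "suffixient v S" "i < \<sigma>"
  shows "run_end i \<in> S"
proof (rule suffixient_mem_if_unique_occurrence[OF assms(1) right_extensions_at_run_end(2)[OF assms(2)]])
  let ?x = "replicate (k i - 1) (s i)"
  fix j assume "j < length v" "suffix (?x @ [v ! run_end i]) (take (Suc j) v)"
  moreover have "?x \<noteq> []" "last ?x = s i" using k_gt_1[OF assms(2)] by auto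
  ultimately obtain i' where "i' < \<sigma>" "j = run_end i'" "s i = s i'"
    using ends_after_run[of ?x "v ! run_end i" j] nth_v_run_end[OF assms(2)] length_v by auto
  then show "j = run_end i" using inj_s assms(2) by (metis inj_onD lessThan_iff)
qed

lemma card_boundaries: "card boundaries = 2 * \<sigma>"
proof -
  have gap: "run_end j + 2 \<le> run_end i" if "i < j" "j \<in> {..<\<sigma>}" for i j
    using run_end_gap that by simp
  have "inj_on run_end {..<\<sigma>}" "inj_on (\<lambda>i. run_end i - 1) {..<\<sigma>}"
    by (auto intro!: linorder_inj_onI' dest!: gap)
  moreover have "(\<lambda>i. run_end i - 1) ` {..<\<sigma>} \<inter> run_end ` {..<\<sigma>} = {}"
  proof -
    have "run_end i - 1 \<noteq> run_end j" if "i < \<sigma>" "j < \<sigma>" for i j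
    proof (cases "i < j")
      case False
      then have "run_end i \<le> run_end j" using run_end_gap[of j i] that by (cases "i = j") auto
      moreover have "0 < run_end i" using run_end_Suc[of i] k_gt_1[of i] that by simp
      ultimately show ?thesis by simp
    qed (use run_end_gap[of i j] that in simp)
    then show ?thesis by blast
  qed
  ultimately show ?thesis by (simp add: card_Un_disjoint card_image)
qed

lemma min_suffixient_size_block_word:
  assumes "0 < \<sigma>"
  shows "min_suffixient_size v = 2 * \<sigma>"
  unfolding min_suffixient_size_def
proof (rule Least_equality)
  show "\<exists>S. suffixient v S \<and> card S = 2 * \<sigma>"
    using suffixient_boundaries[OF assms] card_boundaries by blast
  fix n assume "\<exists>S. suffixient v S \<and> card S = n"
  then obtain S where S: "suffixient v S" "card S = n" by blast
  then have "finite S" unfolding suffixient_def using finite_subset by blast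
  moreover have "boundaries \<subseteq> S"
    using run_last_mem_suffixient[OF S(1)] run_end_mem_suffixient[OF S(1)] by blast
  ultimately show "2 * \<sigma> \<le> n"
    using card_mono card_boundaries S(2) by metis
qed

end

theorem lemma2:
  fixes \<sigma> :: nat and s :: "nat \<Rightarrow> 'a::linorder" and k :: "nat \<Rightarrow> nat" and dollar :: 'a
  assumes "\<sigma> \<ge> 1"
    and "strict_mono_on {..<\<sigma>} s"
    and "\<And>i. i < \<sigma> \<Longrightarrow> k i > 1"
    and "dollar < s 0"
  shows "min_suffixient_size (block_word \<sigma> s k @ [dollar]) = 2 * \<sigma>"
proof -
  interpret end_marked_block_word \<sigma> s k dollar
  proof
    show "inj_on s {..<\<sigma>}" using assms(2) by (rule strict_mono_on_imp_inj_on)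
    show "dollar \<notin> s ` {..<\<sigma>}"
      using assms(1,4) strict_mono_on_leD[OF assms(2), of 0] by fastforce
  qed (rule assms(3))
  show ?thesis using min_suffixient_size_block_word assms(1) by simp
qed

end
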